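(* There exist a continuum $K$ and a pairwise disjoint sequence $(f_n)_{n\in\mathbb{N}}$ in $C_1(K)$ such that $K$ is an extension of $[0,1]$ by continuous functions (i.e. $K=[0,1]((g_n)_{n\in\mathbb{N}})$ for some pairwise disjoint sequence $(g_n)_{n\in\mathbb{N}}$ in $C_1([0,1])$) and the extension $K((f_n)_{n\in\mathbb{N}})$ is disconnected.
   Context: All spaces are Hausdorff. A continuum is a metrizable, compact, connected space. For a compact space $K$, $C_1(K)$ denotes the set of continuous functions $K\to[0,1]$; $f,g$ are disjoint if $f\cdot g=0$. For a real function $f$ on $K$, $supp(f)$ is the closure of $\{x\in K: f(x)\neq 0\}$. For a pairwise disjoint sequence $(f_n)_{n\in\mathbb{N}}$ in $C_1(K)$, let $D((f_n)_{n\in\mathbb{N}})$ be the union of all open sets $U\subseteq K$ such that $\{n: U\cap supp(f_n)\neq\emptyset\}$ is finite. The extension of $K$ by $(f_n)_{n\in\mathbb{N}}$, denoted $K((f_n)_{n\in\mathbb{N}})$, is the closure in $K\times[0,1]$ of the graph of the function $\sum_{n\in\mathbb{N}} f_n$ restricted to $D((f_n)_{n\in\mathbb{N}})$. *)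

theory Defs
  imports "HOL-Analysis.Analysis"
begin

definition C1 :: "'a::topological_space set \<Rightarrow> ('a \<Rightarrow> real) set" where
  "C1 K = {f. continuous_on K f \<and> f ` K \<subseteq> {0..1}}"

text \<open>Support of f as a function on K (K closed in the ambient space in all uses).\<close>
definition supp_on :: "'a::topological_space set \<Rightarrow> ('a \<Rightarrow> real) \<Rightarrow> 'a set" where
  "supp_on K f = closure {x \<in> K. f x \<noteq> 0}"

definition pairwise_disjoint_seq :: "'a set \<Rightarrow> (nat \<Rightarrow> 'a \<Rightarrow> real) \<Rightarrow> bool" where
  "pairwise_disjoint_seq K f \<longleftrightarrow> (\<forall>n m. n \<noteq> m \<longrightarrow> (\<forall>x\<in>K. f n x * f m x = 0))"

definition Dset :: "'a::topological_space set \<Rightarrow> (nat \<Rightarrow> 'a \<Rightarrow> real) \<Rightarrow> 'a set" where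
  "Dset K f = \<Union>{U. openin (top_of_set K) U \<and> finite {n. U \<inter> supp_on K (f n) \<noteq> {}}}"

definition extension :: "'a::topological_space set \<Rightarrow> (nat \<Rightarrow> 'a \<Rightarrow> real) \<Rightarrow> ('a \<times> real) set" where
  "extension K f = closure {(x, \<Sum>n. f n x) | x. x \<in> Dset K f}"

end

theory Submission
  imports Defs
begin

text \<open>
  The continuum is a topologist's sine curve: tents of height 1 over the intervals
  [node n, node (n+1)], which shrink geometrically towards 1/2, closed up by the limit segment
  {1/2} \<times> [0,1] and continued by [1/2,1] \<times> {0}. The second sequence consists of bumps over the
  valleys node n, cut off by 1/2 - y. Every point of the curve over [0,1/2) at height below 1/4
  is within half a radius of a valley, so there the sum of the bumps is at least 1/4; every
  point (1/2, y) with y < 1/2 is a limit of points of infinitely many supports, so it lies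
  outside D. Hence the extension splits into the closed part where the height or the new
  coordinate is at least 1/4, and the closed part over (1/2,1] where both vanish.
\<close>

lemma Dset_subset: "Dset K f \<subseteq> K"
  unfolding Dset_def using openin_subset by fastforce

lemma in_DsetI:
  "openin (top_of_set K) U \<Longrightarrow> x \<in> U \<Longrightarrow> finite {n. U \<inter> supp_on K (f n) \<noteq> {}} \<Longrightarrow> x \<in> Dset K f"
  unfolding Dset_def by blast

lemma supp_on_subset_closed:
  assumes "closed C" "\<And>x. x \<in> K \<Longrightarrow> f x \<noteq> 0 \<Longrightarrow> x \<in> C"
  shows "supp_on K f \<subseteq> C"
  unfolding supp_on_def using assms by (intro closure_minimal) auto

lemma in_Dset_if_supp_on_subset:
  assumes "p \<in> K" "open W" "p \<in> W" "\<And>n. supp_on K (f n) \<subseteq> C n" "finite {n. W \<inter> C n \<noteq> {}}"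
  shows "p \<in> Dset K f"
proof (rule in_DsetI)
  show "openin (top_of_set K) (K \<inter> W)" using \<open>open W\<close> by (rule openin_open_Int)
  have "{n. K \<inter> W \<inter> supp_on K (f n) \<noteq> {}} \<subseteq> {n. W \<inter> C n \<noteq> {}}" using assms(4) by blast
  then show "finite {n. K \<inter> W \<inter> supp_on K (f n) \<noteq> {}}" using assms(5) by (rule finite_subset)
qed (use assms in auto)

lemma not_in_Dset_if_supports_accumulate:
  assumes "q \<longlonglongrightarrow> p" "\<And>n. q n \<in> K" "\<And>n. f n (q n) \<noteq> 0"
  shows "p \<notin> Dset K f"
proof
  assume "p \<in> Dset K f"
  then obtain U where U: "openin (top_of_set K) U" "p \<in> U" "finite {n. U \<inter> supp_on K (f n) \<noteq> {}}"
    unfolding Dset_def by blast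
  obtain T where "open T" "U = K \<inter> T" using U(1) by (auto simp: openin_open)
  then have "eventually (\<lambda>n. q n \<in> T) sequentially"
    using U(2) assms(1) by (auto intro: topological_tendstoD)
  then obtain N where N: "\<And>n. n \<ge> N \<Longrightarrow> q n \<in> T" by (auto simp: eventually_sequentially)
  have "q n \<in> supp_on K (f n)" for n
    unfolding supp_on_def using assms(2,3) closure_subset by fastforce
  then have "{N..} \<subseteq> {n. U \<inter> supp_on K (f n) \<noteq> {}}"
    using N assms(2) \<open>U = K \<inter> T\<close> by auto
  then show False using U(3) infinite_Ici finite_subset by blast
qed

lemma suminf_eq_single: "(\<And>n. n \<noteq> j \<Longrightarrow> h n = 0) \<Longrightarrow> (\<Sum>n. h n) = (h j :: real)"
  using suminf_finite[of "{j}" h] by auto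

definition tent :: "real \<Rightarrow> real \<Rightarrow> real \<Rightarrow> real" where
  "tent c r x = max 0 (1 - \<bar>x - c\<bar> / r)"

lemma tent_range: "0 < r \<Longrightarrow> tent c r x \<in> {0..1}"
  by (auto simp: tent_def)

lemma tent_nonzero_iff: "0 < r \<Longrightarrow> tent c r x \<noteq> 0 \<longleftrightarrow> \<bar>x - c\<bar> < r"
  by (auto simp: tent_def max_def field_simps)

lemma tent_eq: "0 < r \<Longrightarrow> \<bar>x - c\<bar> \<le> r \<Longrightarrow> tent c r x = 1 - \<bar>x - c\<bar> / r"
  by (auto simp: tent_def max_def field_simps)

lemma continuous_on_tent [continuous_intros]:
  "continuous_on S h \<Longrightarrow> continuous_on S (\<lambda>x. tent c r (h x))"
  unfolding tent_def divide_inverse by (intro continuous_intros)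

definition node :: "nat \<Rightarrow> real" where
  "node n = 1/2 - (1/2)^Suc n"

definition rad :: "nat \<Rightarrow> real" where
  "rad n = (1/2)^(n+3)"

lemma rad_pos: "0 < rad n"
  by (simp add: rad_def)

lemma node_Suc: "node (Suc n) = node n + 2 * rad n"
  by (simp add: node_def rad_def power_add power_divide)

lemma rad_Suc: "rad (Suc n) = rad n / 2"
  by (simp add: rad_def power_add power_divide)

lemma half_minus_node: "1/2 - node n = 4 * rad n"
  by (simp add: node_def rad_def power_add power_divide)

lemma node_0: "node 0 = 0"
  by (simp add: node_def)

lemma node_mono: "n \<le> m \<Longrightarrow> node n \<le> node m"
  unfolding node_def by (simp add: power_decreasing)

lemma rad_antimono: "n \<le> m \<Longrightarrow> rad m \<le> rad n"
  unfolding rad_def by (simp add: power_decreasing)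

lemma node_nonneg: "0 \<le> node n"
  using node_mono[of 0 n] by (simp add: node_0)

lemma node_less_half: "node n < 1/2"
  using half_minus_node[of n] rad_pos[of n] by linarith

lemma rad_tendsto: "rad \<longlonglongrightarrow> 0"
  unfolding rad_def by (intro LIMSEQ_power_zero[THEN LIMSEQ_ignore_initial_segment]) simp

lemma node_tendsto: "node \<longlonglongrightarrow> 1/2"
proof -
  have "node = (\<lambda>n. 1/2 - 4 * rad n)"
    using half_minus_node by (intro ext) (simp add: algebra_simps)
  moreover have "(\<lambda>n. 1/2 - 4 * rad n) \<longlonglongrightarrow> 1/2 - 4 * 0"
    by (intro tendsto_diff tendsto_mult tendsto_const rad_tendsto)
  ultimately show ?thesis by simp
qed

lemma exists_node_gt: "x < 1/2 \<Longrightarrow> \<exists>N. x < node N"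
proof -
  assume "x < 1/2"
  then have "eventually (\<lambda>N. x < node N) sequentially"
    by (rule order_tendstoD(1)[OF node_tendsto])
  then obtain N where "\<And>n. n \<ge> N \<Longrightarrow> x < node n"
    by (auto simp: eventually_sequentially)
  then show ?thesis by blast
qed

lemma finite_nodes_below: "c < 1/2 \<Longrightarrow> finite {n. node n - rad n < c}"
proof -
  assume "c < 1/2"
  have "(\<lambda>n. node n - rad n) \<longlonglongrightarrow> 1/2 - 0"
    by (rule tendsto_diff[OF node_tendsto rad_tendsto])
  then have "eventually (\<lambda>n. c < node n - rad n) sequentially"
    using \<open>c < 1/2\<close> by (intro order_tendstoD(1)) auto
  then obtain N where N: "\<And>n. n \<ge> N \<Longrightarrow> c < node n - rad n"
    by (auto simp: eventually_sequentially)
  then have "{n. node n - rad n < c} \<subseteq> {..<N}"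
  proof (intro subsetI)
    fix n assume "n \<in> {n. node n - rad n < c}"
    then show "n \<in> {..<N}" using N[of n] by (cases "N \<le> n") auto
  qed
  then show ?thesis by (rule finite_subset) simp
qed

lemma node_interval_ex:
  assumes "0 \<le> x" "x < 1/2"
  shows "\<exists>k. node k \<le> x \<and> x < node (Suc k)"
proof -
  obtain N where "x < node N" using exists_node_gt assms(2) by blast
  then show ?thesis
  proof (induction N)
    case 0
    then show ?case using assms(1) by (simp add: node_0)
  next
    case (Suc N)
    show ?case
    proof (cases "x < node N")
      case True
      then show ?thesis by (rule Suc.IH)
    next
      case False
      then show ?thesis using Suc.prems by (intro exI[of _ N]) simp
    qed
  qed
qed

definition peak :: "nat \<Rightarrow> real \<Rightarrow> real" where
  "peak n = tent (node n + rad n) (rad n)"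

lemma continuous_on_peak [continuous_intros]:
  "continuous_on S h \<Longrightarrow> continuous_on S (\<lambda>x. peak n (h x))"
  unfolding peak_def by (rule continuous_on_tent)

lemma peak_range: "peak n x \<in> {0..1}"
  unfolding peak_def by (rule tent_range[OF rad_pos])

lemma peak_nonzero_imp: "peak n x \<noteq> 0 \<Longrightarrow> node n < x \<and> x < node (Suc n)"
  unfolding peak_def using tent_nonzero_iff[OF rad_pos] by (auto simp: node_Suc)

lemma peak_eq_0_off_interval:
  assumes "node k \<le> x" "x < node (Suc k)" "n \<noteq> k"
  shows "peak n x = 0"
proof (rule ccontr)
  assume "peak n x \<noteq> 0"
  then have "node n < x" "x < node (Suc n)" by (auto dest: peak_nonzero_imp)
  moreover have "node (Suc n) \<le> node k \<or> node (Suc k) \<le> node n"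
    using \<open>n \<noteq> k\<close> by (cases "n < k") (auto intro: node_mono)
  ultimately show False using assms(1,2) by linarith
qed

lemma peak_disjoint: "n \<noteq> m \<Longrightarrow> peak n x * peak m x = 0"
  using peak_nonzero_imp[of n x] peak_eq_0_off_interval[of n x m] by fastforce

definition peak_sum :: "real \<Rightarrow> real" where
  "peak_sum x = (\<Sum>n. peak n x)"

lemma peak_sum_eq_peak: "node k \<le> x \<Longrightarrow> x < node (Suc k) \<Longrightarrow> peak_sum x = peak k x"
  unfolding peak_sum_def by (intro suminf_eq_single peak_eq_0_off_interval)

lemma peak_sum_eq_partial: "x \<le> node N \<Longrightarrow> peak_sum x = (\<Sum>n<N. peak n x)"
proof -
  assume "x \<le> node N"
  have "peak n x = 0" if "n \<notin> {..<N}" for n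
    using that node_mono[of N n] \<open>x \<le> node N\<close> peak_nonzero_imp[of n x] by fastforce
  then show ?thesis unfolding peak_sum_def by (rule suminf_finite[OF finite_lessThan])
qed

lemma peak_sum_eq_0: "1/2 \<le> x \<Longrightarrow> peak_sum x = 0"
proof -
  assume "1/2 \<le> x"
  have "peak n x = 0" for n
    using \<open>1/2 \<le> x\<close> peak_nonzero_imp[of n x] node_less_half[of "Suc n"] by linarith
  then show ?thesis by (simp add: peak_sum_def)
qed

lemma peak_sum_range: "0 \<le> x \<Longrightarrow> peak_sum x \<in> {0..1}"
proof (cases "x < 1/2")
  case True
  assume "0 \<le> x"
  then obtain k where "node k \<le> x" "x < node (Suc k)" using node_interval_ex True by blast
  then show ?thesis using peak_sum_eq_peak peak_range by simp
qed (simp add: peak_sum_eq_0)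

lemma supp_on_peak: "supp_on K (peak n) \<subseteq> {node n..node (Suc n)}"
  by (rule supp_on_subset_closed) (auto dest: peak_nonzero_imp)

lemma in_Dset_peak:
  assumes "x \<in> {0..1}" "x \<noteq> 1/2"
  shows "x \<in> Dset {0..1} peak"
proof (cases "x < 1/2")
  case True
  define c where "c = (x + 1/2) / 2"
  have "node n - rad n < c" if "{..<c} \<inter> {node n..node (Suc n)} \<noteq> {}" for n
    using that rad_pos[of n] by auto
  then have "finite {n. {..<c} \<inter> {node n..node (Suc n)} \<noteq> {}}"
    using True by (intro finite_subset[OF _ finite_nodes_below[of c]]) (auto simp: c_def)
  moreover have "x \<in> {..<c}" using True by (simp add: c_def)
  ultimately show ?thesis
    by (intro in_Dset_if_supp_on_subset[OF assms(1) open_lessThan _ supp_on_peak])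
next
  case False
  have "{1/2<..} \<inter> {node n..node (Suc n)} = {}" for n
    using node_less_half[of "Suc n"] by auto
  moreover have "x \<in> {1/2<..}" using False assms(2) by simp
  ultimately show ?thesis
    by (intro in_Dset_if_supp_on_subset[OF assms(1) open_greaterThan[of "1/2"] _ supp_on_peak]) simp_all
qed

definition peak_graph :: "(real \<times> real) set" where
  "peak_graph = {(x, peak_sum x) | x. x \<in> Dset {0..1} peak}"

definition sine_continuum :: "(real \<times> real) set" where
  "sine_continuum = extension {0..1} peak"

lemma sine_continuum_eq_closure: "sine_continuum = closure peak_graph"
  unfolding sine_continuum_def extension_def peak_graph_def peak_sum_def by simp

lemma graph_point_in_sine_continuum:
  "x \<in> {0..1} \<Longrightarrow> x \<noteq> 1/2 \<Longrightarrow> (x, peak_sum x) \<in> sine_continuum"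
  unfolding sine_continuum_eq_closure peak_graph_def
  using in_Dset_peak closure_subset by fastforce

text \<open>Over [0, node N] the graph is that of the continuous finite sum of the first N peaks,
  a closed condition that therefore passes to the closure.\<close>

lemma sine_continuum_left:
  assumes "p \<in> sine_continuum" "fst p < 1/2"
  shows "0 \<le> fst p \<and> snd p = peak_sum (fst p)"
proof -
  obtain N where N: "fst p < node N" using exists_node_gt assms(2) by blast
  define E where "E = ({q. node N \<le> fst q} \<union> {q. snd q = (\<Sum>n<N. peak n (fst q))}) \<inter> {q. 0 \<le> fst q}"
  have "closed E"
    unfolding E_def by (intro closed_Int closed_Un closed_Collect_le closed_Collect_eq continuous_intros)
  moreover have "peak_graph \<subseteq> E"
  proof
    fix q assume "q \<in> peak_graph"
    then obtain x where q: "q = (x, peak_sum x)" "x \<in> {0..1}"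
      unfolding peak_graph_def using Dset_subset by blast
    then show "q \<in> E" unfolding E_def using peak_sum_eq_partial[of x N] by (cases "x \<le> node N") auto
  qed
  ultimately have "sine_continuum \<subseteq> E"
    unfolding sine_continuum_eq_closure by (rule closure_minimal[rotated])
  then show ?thesis using assms(1) N peak_sum_eq_partial[of "fst p" N] unfolding E_def by auto
qed

lemma sine_continuum_right:
  assumes "p \<in> sine_continuum" "1/2 < fst p"
  shows "snd p = 0"
proof -
  have "closed ({q::real \<times> real. fst q \<le> 1/2} \<union> {q. snd q = 0})"
    by (intro closed_Un closed_Collect_le closed_Collect_eq continuous_intros)
  moreover have "peak_graph \<subseteq> {q. fst q \<le> 1/2} \<union> {q. snd q = 0}"
  proof
    fix q assume "q \<in> peak_graph"
    then obtain x where "q = (x, peak_sum x)" unfolding peak_graph_def by blast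
    then show "q \<in> {q. fst q \<le> 1/2} \<union> {q. snd q = 0}"
      using peak_sum_eq_0[of x] by (cases "x \<le> 1/2") auto
  qed
  ultimately have "sine_continuum \<subseteq> {q. fst q \<le> 1/2} \<union> {q. snd q = 0}"
    unfolding sine_continuum_eq_closure by (rule closure_minimal[rotated])
  then show ?thesis using assms by auto
qed

lemma peak_graph_subset_square: "peak_graph \<subseteq> cbox (0, 0) (1, 1)"
proof
  fix q assume "q \<in> peak_graph"
  then obtain x where "q = (x, peak_sum x)" "x \<in> {0..1}"
    unfolding peak_graph_def using Dset_subset by blast
  then show "q \<in> cbox (0, 0) (1, 1)" using peak_sum_range[of x] by (simp add: cbox_Pair_iff)
qed

lemma sine_continuum_subset_square: "sine_continuum \<subseteq> cbox (0, 0) (1, 1)"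
  unfolding sine_continuum_eq_closure
  by (rule closure_minimal[OF peak_graph_subset_square closed_cbox])

lemma compact_sine_continuum: "compact sine_continuum"
  unfolding sine_continuum_eq_closure compact_closure
  by (rule bounded_subset[OF bounded_cbox peak_graph_subset_square])

definition left_graph :: "(real \<times> real) set" where
  "left_graph = (\<Union>N. (\<lambda>x. (x, \<Sum>n<N. peak n x)) ` {0..node N})"

lemma connected_left_graph: "connected left_graph"
  unfolding left_graph_def
proof (rule connected_Union)
  fix S assume "S \<in> range (\<lambda>N. (\<lambda>x. (x, \<Sum>n<N. peak n x)) ` {0..node N})"
  then obtain N where "S = (\<lambda>x. (x, \<Sum>n<N. peak n x)) ` {0..node N}" by blast
  moreover have "continuous_on {0..node N} (\<lambda>x. (x, \<Sum>n<N. peak n x))"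
    by (intro continuous_intros)
  ultimately show "connected S" using connected_continuous_image connected_Icc by blast
next
  have "peak n 0 = 0" for n
    using peak_nonzero_imp[of n 0] node_nonneg[of n] by linarith
  then have "(0, 0) \<in> (\<lambda>x. (x, \<Sum>n<N. peak n x)) ` {0..node N}" for N
    using node_nonneg[of N] by (intro image_eqI[of _ _ 0]) auto
  then show "\<Inter> (range (\<lambda>N. (\<lambda>x. (x, \<Sum>n<N. peak n x)) ` {0..node N})) \<noteq> {}" by blast
qed

lemma left_graph_subset: "left_graph \<subseteq> peak_graph"
proof
  fix q assume "q \<in> left_graph"
  then obtain N x where x: "x \<in> {0..node N}" and q: "q = (x, \<Sum>n<N. peak n x)"
    unfolding left_graph_def by auto
  have "x \<in> Dset {0..1} peak"
    using x node_less_half[of N] by (intro in_Dset_peak) auto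
  moreover have "q = (x, peak_sum x)" using q x peak_sum_eq_partial[of x N] by simp
  ultimately show "q \<in> peak_graph" unfolding peak_graph_def by blast
qed

lemma graph_point_in_left_graph: "0 \<le> x \<Longrightarrow> x \<le> node N \<Longrightarrow> (x, peak_sum x) \<in> left_graph"
proof -
  assume x: "0 \<le> x" "x \<le> node N"
  then have "(x, peak_sum x) = (x, \<Sum>n<N. peak n x)" by (simp add: peak_sum_eq_partial)
  moreover have "x \<in> {0..node N}" using x by simp
  ultimately have "(x, peak_sum x) \<in> (\<lambda>x. (x, \<Sum>n<N. peak n x)) ` {0..node N}"
    by (rule image_eqI)
  then show ?thesis unfolding left_graph_def by (rule UN_I[OF UNIV_I])
qed

lemma peak_sum_node: "peak_sum (node N) = 0"
  using peak_sum_eq_peak[of N "node N"] peak_nonzero_imp[of N "node N"] node_Suc[of N] rad_pos[of N]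
  by fastforce

lemma half_in_closure_left_graph: "(1/2, 0) \<in> closure left_graph"
proof (rule closed_sequentially[OF closed_closure])
  show "(node N, 0) \<in> closure left_graph" for N
    using graph_point_in_left_graph[of "node N" N] node_nonneg[of N] closure_subset
    by (auto simp: peak_sum_node)
  show "(\<lambda>N. (node N, 0::real)) \<longlonglongrightarrow> (1/2, 0)"
    by (rule tendsto_Pair[OF node_tendsto tendsto_const])
qed

lemma peak_graph_subset_left_graph_Un_segment:
  "peak_graph \<subseteq> left_graph \<union> (\<lambda>x. (x, 0)) ` {1/2..1}"
proof
  fix q assume "q \<in> peak_graph"
  then obtain x where q: "q = (x, peak_sum x)" "x \<in> {0..1}"
    unfolding peak_graph_def using Dset_subset by blast
  show "q \<in> left_graph \<union> (\<lambda>x. (x, 0)) ` {1/2..1}"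
  proof (cases "x < 1/2")
    case True
    then obtain N where "x < node N" using exists_node_gt by blast
    then show ?thesis using q graph_point_in_left_graph[of x N] by simp
  next
    case False
    then have "q = (x, 0)" "x \<in> {1/2..1}" using q peak_sum_eq_0[of x] by auto
    then show ?thesis by blast
  qed
qed

lemma segment_subset_sine_continuum: "(\<lambda>x. (x, 0)) ` {1/2..1} \<subseteq> sine_continuum"
proof -
  have half: "(1/2, 0) \<in> sine_continuum"
    using half_in_closure_left_graph closure_mono[OF left_graph_subset]
    unfolding sine_continuum_eq_closure by blast
  show ?thesis
  proof (rule image_subsetI)
    fix x :: real assume "x \<in> {1/2..1}"
    show "(x, 0) \<in> sine_continuum"
    proof (cases "x = 1/2")
      case True
      then show ?thesis using half by blast
    next
      case False
      then show ?thesis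
        using \<open>x \<in> {1/2..1}\<close> graph_point_in_sine_continuum[of x] peak_sum_eq_0[of x] by simp
    qed
  qed
qed

lemma connected_sine_continuum: "connected sine_continuum"
proof -
  define A where "A = closure left_graph \<union> (\<lambda>x. (x, 0)) ` {1/2..1}"
  have "connected ((\<lambda>x. (x, 0::real)) ` {1/2..1::real})"
    by (rule connected_continuous_image[OF _ connected_Icc]) (intro continuous_intros)
  moreover have "(1/2, 0) \<in> (\<lambda>x. (x, 0::real)) ` {1/2..1::real}"
    by (rule image_eqI[of _ _ "1/2"]) simp_all
  ultimately have "connected A"
    unfolding A_def using half_in_closure_left_graph
    by (intro connected_Un[OF connected_imp_connected_closure[OF connected_left_graph]]) blast+
  moreover have "A \<subseteq> sine_continuum"
    using closure_mono[OF left_graph_subset] segment_subset_sine_continuum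
    unfolding A_def sine_continuum_eq_closure by blast
  moreover have "sine_continuum \<subseteq> closure A"
    unfolding sine_continuum_eq_closure A_def
    using peak_graph_subset_left_graph_Un_segment closure_subset[of left_graph]
    by (intro closure_mono) blast
  ultimately show ?thesis by (rule connected_intermediate_closure)
qed

lemma graph_point_in_extension: "p \<in> Dset K f \<Longrightarrow> (p, \<Sum>n. f n p) \<in> extension K f"
  unfolding extension_def by (rule closure_subset[THEN subsetD]) blast

definition valley :: "nat \<Rightarrow> real \<times> real \<Rightarrow> real" where
  "valley n p = min (tent (node n) (rad n) (fst p)) (max 0 (1/2 - snd p))"

lemma continuous_on_valley: "continuous_on S (valley n)"
  unfolding valley_def by (intro continuous_on_min continuous_on_max continuous_on_tent
      continuous_on_diff continuous_on_const continuous_on_fst continuous_on_snd continuous_on_id)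

lemma valley_range: "valley n p \<in> {0..1}"
  using tent_range[OF rad_pos[of n], of "node n" "fst p"] by (auto simp: valley_def)

lemma valley_nonzero_imp: "valley n p \<noteq> 0 \<Longrightarrow> \<bar>fst p - node n\<bar> < rad n"
proof -
  assume "valley n p \<noteq> 0"
  then have "tent (node n) (rad n) (fst p) \<noteq> 0" by (auto simp: valley_def min_def)
  then show ?thesis using tent_nonzero_iff[OF rad_pos] by blast
qed

lemma strips_disjoint:
  assumes "n < m" "\<bar>x - node n\<bar> < rad n" "\<bar>x - node m\<bar> < rad m"
  shows False
proof -
  have "node (Suc n) \<le> node m" "rad m \<le> rad n" using assms(1) by (auto intro: node_mono rad_antimono)
  then show False using assms(2,3) node_Suc[of n] by linarith
qed

lemma valley_disjoint: "n \<noteq> m \<Longrightarrow> valley n p * valley m p = 0"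
  using strips_disjoint valley_nonzero_imp by (metis linorder_neq_iff mult_eq_0_iff)

lemma valley_eq_0: "1/2 \<le> fst p \<Longrightarrow> valley n p = 0"
  using valley_nonzero_imp[of n p] half_minus_node[of n] rad_pos[of n] by fastforce

definition valley_sum :: "real \<times> real \<Rightarrow> real" where
  "valley_sum p = (\<Sum>n. valley n p)"

lemma valley_sum_eq: "valley j p \<noteq> 0 \<Longrightarrow> valley_sum p = valley j p"
  unfolding valley_sum_def
proof (rule suminf_eq_single)
  fix n assume "valley j p \<noteq> 0" "n \<noteq> j"
  then show "valley n p = 0" using valley_disjoint[of n j p] by simp
qed

lemma valley_sum_eq_0: "1/2 \<le> fst p \<Longrightarrow> valley_sum p = 0"
  by (simp add: valley_sum_def valley_eq_0)

lemma supp_on_valley: "supp_on K (valley n) \<subseteq> {q. \<bar>fst q - node n\<bar> \<le> rad n}"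
proof (rule supp_on_subset_closed)
  show "closed {q::real \<times> real. \<bar>fst q - node n\<bar> \<le> rad n}"
    by (intro closed_Collect_le continuous_intros)
qed (use valley_nonzero_imp less_imp_le in blast)

lemma valley_gt_quarter:
  assumes "\<bar>fst p - node n\<bar> < rad n / 2" "snd p < 1/4"
  shows "1/4 < valley n p"
proof -
  have "\<bar>fst p - node n\<bar> / rad n < 1/2" using assms(1) rad_pos[of n] by (simp add: divide_less_eq)
  moreover have "tent (node n) (rad n) (fst p) = 1 - \<bar>fst p - node n\<bar> / rad n"
    using assms(1) rad_pos[of n] by (intro tent_eq) auto
  ultimately have "1/4 < tent (node n) (rad n) (fst p)" by linarith
  moreover have "1/4 < max 0 (1/2 - snd p)" using assms(2) by simp
  ultimately show ?thesis unfolding valley_def using assms(2) by simp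
qed

lemma peak_small_near_nodes:
  assumes "node k \<le> x" "x < node (Suc k)" "peak k x < 1/4"
  shows "\<bar>x - node k\<bar> < rad k / 2 \<or> \<bar>x - node (Suc k)\<bar> < rad (Suc k) / 2"
proof -
  have r: "0 < rad k" by (rule rad_pos)
  have "\<bar>x - (node k + rad k)\<bar> \<le> rad k" using assms(1,2) node_Suc[of k] by auto
  then have "peak k x = 1 - \<bar>x - (node k + rad k)\<bar> / rad k"
    unfolding peak_def using r by (rule tent_eq[rotated])
  then have "3/4 < \<bar>x - (node k + rad k)\<bar> / rad k" using assms(3) by linarith
  then have "3/4 * rad k < \<bar>x - (node k + rad k)\<bar>" using r by (simp add: less_divide_eq)
  then show ?thesis using assms(1,2) node_Suc[of k] rad_Suc[of k] r by (auto simp: abs_if split: if_splits)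
qed

lemma valley_sum_ge_quarter:
  assumes "p \<in> sine_continuum" "fst p < 1/2" "snd p < 1/4"
  shows "1/4 \<le> valley_sum p"
proof -
  have "0 \<le> fst p" "snd p = peak_sum (fst p)" using sine_continuum_left[OF assms(1,2)] by auto
  then obtain k where k: "node k \<le> fst p" "fst p < node (Suc k)" "snd p = peak k (fst p)"
    using node_interval_ex assms(2) peak_sum_eq_peak by metis
  moreover have "peak k (fst p) < 1/4" using k(3) assms(3) by simp
  ultimately obtain j where "\<bar>fst p - node j\<bar> < rad j / 2"
    using peak_small_near_nodes[of k "fst p"] by blast
  then have "1/4 < valley j p" using assms(3) by (rule valley_gt_quarter)
  then show ?thesis using valley_sum_eq[of j p] by simp
qed

text \<open>The witnesses lie on the rising edge of peak n at height y, where valley n is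
  still positive.\<close>

lemma limit_segment_not_in_Dset:
  assumes "0 \<le> y" "y < 1/2"
  shows "(1/2, y) \<notin> Dset sine_continuum valley"
proof (rule not_in_Dset_if_supports_accumulate[where q = "\<lambda>n. (node n + y * rad n, y)"])
  have "(\<lambda>n. node n + y * rad n) \<longlonglongrightarrow> 1/2 + y * 0"
    by (intro tendsto_add tendsto_mult tendsto_const node_tendsto rad_tendsto)
  then show "(\<lambda>n. (node n + y * rad n, y)) \<longlonglongrightarrow> (1/2, y)"
    by (intro tendsto_Pair tendsto_const) simp
next
  fix n
  have r: "0 < rad n" by (rule rad_pos)
  have x: "node n \<le> node n + y * rad n" "node n + y * rad n < node (Suc n)"
    using assms r node_Suc[of n] by (auto intro: mult_right_less_imp_less)
  have "peak n (node n + y * rad n) = y"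
    unfolding peak_def using assms r by (subst tent_eq) (auto simp: field_simps)
  then have "peak_sum (node n + y * rad n) = y" using peak_sum_eq_peak[OF x] by simp
  moreover have "node n + y * rad n \<in> {0..1}" "node n + y * rad n \<noteq> 1/2"
    using x node_nonneg[of n] node_less_half[of "Suc n"] by auto
  ultimately show "(node n + y * rad n, y) \<in> sine_continuum"
    using graph_point_in_sine_continuum by metis
  have "tent (node n) (rad n) (node n + y * rad n) = 1 - y"
    using assms r by (subst tent_eq) auto
  then show "valley n (node n + y * rad n, y) \<noteq> 0"
    using assms by (simp add: valley_def)
qed

lemma extension_valley_subset:
  "extension sine_continuum valley \<subseteq>
     {q. 1/4 \<le> snd (fst q) \<or> 1/4 \<le> snd q} \<union> {q. snd (fst q) = 0 \<and> snd q = 0}"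
  (is "_ \<subseteq> ?U \<union> ?L")
proof -
  have "closed (?U \<union> ?L)"
    by (intro closed_Un closed_Collect_disj closed_Collect_conj closed_Collect_le closed_Collect_eq
        continuous_intros)
  moreover have "(p, valley_sum p) \<in> ?U \<union> ?L" if "p \<in> Dset sine_continuum valley" for p
  proof -
    obtain x y where p: "p = (x, y)" by (cases p)
    have pK: "(x, y) \<in> sine_continuum" using that Dset_subset p by blast
    consider "x < 1/2" | "x = 1/2" | "1/2 < x" by linarith
    then show ?thesis
    proof cases
      case 1
      then show ?thesis using valley_sum_ge_quarter[OF pK] p by (cases "y < 1/4") auto
    next
      case 2
      have "0 \<le> y" using pK sine_continuum_subset_square by (auto simp: cbox_Pair_iff)
      then have "1/2 \<le> y" using limit_segment_not_in_Dset[of y] that p 2 by fastforce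
      then show ?thesis using p by simp
    next
      case 3
      then show ?thesis using sine_continuum_right[OF pK] valley_sum_eq_0[of p] p by simp
    qed
  qed
  then have "{(p, valley_sum p) | p. p \<in> Dset sine_continuum valley} \<subseteq> ?U \<union> ?L" by blast
  ultimately show ?thesis
    unfolding extension_def valley_sum_def[symmetric] by (rule closure_minimal[rotated])
qed

lemma origin_in_Dset_valley: "(0, 0) \<in> Dset sine_continuum valley"
proof (rule in_Dset_if_supp_on_subset[OF _ _ _ supp_on_valley])
  have "peak_sum 0 = 0" using peak_sum_node[of 0] by (simp add: node_0)
  then show "(0, 0) \<in> sine_continuum" using graph_point_in_sine_continuum[of 0] by simp
  show "open {q::real \<times> real. fst q < 1/4}" by (intro open_Collect_less continuous_intros)
  have "node n - rad n < 1/4" if "{q::real \<times> real. fst q < 1/4} \<inter> {q. \<bar>fst q - node n\<bar> \<le> rad n} \<noteq> {}" for n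
    using that by auto
  then show "finite {n. {q::real \<times> real. fst q < 1/4} \<inter> {q. \<bar>fst q - node n\<bar> \<le> rad n} \<noteq> {}}"
    by (intro finite_subset[OF _ finite_nodes_below[of "1/4"]]) auto
qed simp

lemma corner_in_Dset_valley: "(1, 0) \<in> Dset sine_continuum valley"
proof (rule in_Dset_if_supp_on_subset[OF _ _ _ supp_on_valley])
  show "(1, 0) \<in> sine_continuum" using graph_point_in_sine_continuum[of 1] peak_sum_eq_0[of 1] by simp
  show "open {q::real \<times> real. 1/2 < fst q}" by (intro open_Collect_less continuous_intros)
  have "{q::real \<times> real. 1/2 < fst q} \<inter> {q. \<bar>fst q - node n\<bar> \<le> rad n} = {}" for n
    using half_minus_node[of n] rad_pos[of n] by auto
  then show "finite {n. {q::real \<times> real. 1/2 < fst q} \<inter> {q. \<bar>fst q - node n\<bar> \<le> rad n} \<noteq> {}}"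
    by simp
qed simp

lemma not_connected_extension_valley: "\<not> connected (extension sine_continuum valley)"
proof -
  let ?E = "extension sine_continuum valley"
  let ?U = "{q :: (real \<times> real) \<times> real. 1/4 \<le> snd (fst q) \<or> 1/4 \<le> snd q}"
  let ?L = "{q :: (real \<times> real) \<times> real. snd (fst q) = 0 \<and> snd q = 0}"
  have "valley 0 (0, 0) = 1/2" by (simp add: valley_def tent_def node_0)
  then have "valley_sum (0, 0) = 1/2" using valley_sum_eq[of 0 "(0, 0)"] by simp
  then have "((0, 0), 1/2) \<in> ?E"
    using graph_point_in_extension[OF origin_in_Dset_valley] unfolding valley_sum_def by metis
  moreover have "((1, 0), 0) \<in> ?E"
    using graph_point_in_extension[OF corner_in_Dset_valley] valley_sum_eq_0[of "(1, 0)"]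
    unfolding valley_sum_def by simp
  moreover have "closed ?U" "closed ?L"
    by (intro closed_Collect_disj closed_Collect_conj closed_Collect_le closed_Collect_eq
        continuous_intros)+
  moreover have "?U \<inter> ?L = {}" by auto
  ultimately have "closed ?U \<and> closed ?L \<and> ?E \<subseteq> ?U \<union> ?L \<and> ?U \<inter> ?L \<inter> ?E = {} \<and>
      ?U \<inter> ?E \<noteq> {} \<and> ?L \<inter> ?E \<noteq> {}"
    using extension_valley_subset by auto
  then have "\<exists>A B. closed A \<and> closed B \<and> ?E \<subseteq> A \<union> B \<and> A \<inter> B \<inter> ?E = {} \<and>
      A \<inter> ?E \<noteq> {} \<and> B \<inter> ?E \<noteq> {}"
    by (rule exI[of _ ?U, OF exI[of _ ?L]])
  then show ?thesis unfolding connected_closed by simp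
qed

theorem theorem4p2:
  shows "\<exists>(K :: (real \<times> real) set) (f :: nat \<Rightarrow> real \<times> real \<Rightarrow> real) (g :: nat \<Rightarrow> real \<Rightarrow> real).
     K \<noteq> {} \<and> compact K \<and> connected K \<and>
     (\<forall>n. g n \<in> C1 {0..1}) \<and> pairwise_disjoint_seq {0..1} g \<and> K = extension {0..1} g \<and>
     (\<forall>n. f n \<in> C1 K) \<and> pairwise_disjoint_seq K f \<and>
     \<not> connected (extension K f)"
proof (intro exI conjI)
  show "sine_continuum \<noteq> {}" using corner_in_Dset_valley Dset_subset by blast
  show "compact sine_continuum" by (rule compact_sine_continuum)
  show "connected sine_continuum" by (rule connected_sine_continuum)
  show "sine_continuum = extension {0..1} peak" by (rule sine_continuum_def)
  show "\<forall>n. peak n \<in> C1 {0..1}"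
    using peak_range by (auto simp: C1_def intro: continuous_on_peak[OF continuous_on_id])
  show "pairwise_disjoint_seq {0..1} peak"
    using peak_disjoint by (simp add: pairwise_disjoint_seq_def)
  show "\<forall>n. valley n \<in> C1 sine_continuum"
    using valley_range continuous_on_valley by (auto simp: C1_def)
  show "pairwise_disjoint_seq sine_continuum valley"
    using valley_disjoint by (simp add: pairwise_disjoint_seq_def)
  show "\<not> connected (extension sine_continuum valley)" by (rule not_connected_extension_valley)
qed

end
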